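(* Let $\mathcal K$ be a finitely complete 2-category with a good yoneda structure. Let $A$ be an admissible object, $f:A\to C$ and $g:A\to B$ admissible 1-cells, $h:B\to C$ a 1-cell, $\phi:f\Rightarrow hg$ a 2-cell, and $\phi':B(g,1)\Rightarrow C(f,1)h$ the corresponding 2-cell (the unique one with $(C(f,1)\phi)\cdot\chi^f=(\phi'g)\cdot\chi^g$). Then: (1) $\phi$ exhibits $h$ as a left extension of $f$ along $g$ iff $\phi'$ exhibits $h$ as a left lifting of $B(g,1)$ along $C(f,1)$; (2) $\phi$ exhibits $h$ as a pointwise left extension of $f$ along $g$ iff $\phi'$ exhibits $h$ as an absolute left lifting of $B(g,1)$ along $C(f,1)$; (3) $\phi$ exhibits $g$ as an absolute left lifting of $f$ along $h$ iff $\phi'$ is an isomorphism.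
   Context: For $f:A\to B$, $g:C\to B$ the lax pullback $f/g$ has projections $p:f/g\to A$, $q:f/g\to C$ and universal 2-cell $\lambda:fp\Rightarrow gq$. Given $f:A\to C$, $g:A\to B$, $h:B\to C$, a 2-cell $\phi:f\Rightarrow hg$ exhibits $h$ as a left extension of $f$ along $g$ if for every $k:B\to C$, $\kappa\mapsto(\kappa g)\cdot\phi$ is a bijection from 2-cells $h\Rightarrow k$ to 2-cells $f\Rightarrow kg$; it exhibits $g$ as a left lifting of $f$ along (through) $h$ if for every $k:A\to B$, $\kappa\mapsto(h\kappa)\cdot\phi$ is a bijection from 2-cells $g\Rightarrow k$ to 2-cells $f\Rightarrow hk$; the lifting is absolute if $\phi j$ exhibits $gj$ as a left lifting of $fj$ along $h$ for all $j:D\to A$. $\phi$ exhibits $h$ as a pointwise left extension of $f$ along $g$ if for every $c:X\to B$, with lax pullback $p:g/c\to A$, $q:g/c\to X$, $\lambda:gp\Rightarrow cq$, the 2-cell $(h\lambda)\cdot(\phi p)$ exhibits $hc$ as a left extension of $fp$ along $q$. A good yoneda structure: a class of admissible 1-cells with $fg$ admissible whenever $f$ is; $A$ admissible when $1_A$ is; for admissible $A$ an object $\mathcal PA$ and admissible $y_A:A\to\mathcal PA$; for $f:A\to B$ with $A$, $f$ admissible a 1-cell $B(f,1):B\to\mathcal PA$ and a 2-cell $\chi^f:y_A\Rightarrow B(f,1)f$; such that (i) $\chi^f$ exhibits $f$ as an absolute left lifting of $y_A$ through $B(f,1)$; (ii) if $A$, $f:A\to B$ admissible and $\psi:y_A\Rightarrow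 kf$ exhibits $f$ as an absolute left lifting of $y_A$ along $k$, then $\psi$ exhibits $k$ as a pointwise left extension of $y_A$ along $f$. In this setting $\chi^g$ exhibits $B(g,1)$ as a left extension of $y_A$ along $g$, so $\phi\mapsto\phi'$ (defined by the equation in the claim) is a well-defined bijection between 2-cells $f\Rightarrow hg$ and 2-cells $B(g,1)\Rightarrow C(f,1)h$. *)

theory Defs
  imports Main
begin

text \<open>A strict 2-category with objects of type 'o, 1-cells of type 'a, 2-cells of type 'c.
  cmp g f is the composite of f : A -> B followed by g : B -> C (written g f in the paper).
  vc beta alpha is vertical composite beta . alpha (alpha : f => g, beta : g => h).
  hc beta alpha is horizontal composite (alpha : f => f', beta : g => g', giving g f => g' f').\<close>

record ('o,'a,'c) twocat_data =
  ob   :: "'o set"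
  arr  :: "'a set"
  src  :: "'a \<Rightarrow> 'o"
  trg  :: "'a \<Rightarrow> 'o"
  ide  :: "'o \<Rightarrow> 'a"
  cmp  :: "'a \<Rightarrow> 'a \<Rightarrow> 'a"
  cell :: "'c set"
  dom2 :: "'c \<Rightarrow> 'a"
  cod2 :: "'c \<Rightarrow> 'a"
  id2  :: "'a \<Rightarrow> 'c"
  vc   :: "'c \<Rightarrow> 'c \<Rightarrow> 'c"
  hc   :: "'c \<Rightarrow> 'c \<Rightarrow> 'c"

definition hom :: "('o,'a,'c,'m) twocat_data_scheme \<Rightarrow> 'o \<Rightarrow> 'o \<Rightarrow> 'a set" where
  "hom K A B = {f \<in> arr K. src K f = A \<and> trg K f = B}"

definition cells :: "('o,'a,'c,'m) twocat_data_scheme \<Rightarrow> 'a \<Rightarrow> 'a \<Rightarrow> 'c set" where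
  "cells K f g = {\<alpha> \<in> cell K. dom2 K \<alpha> = f \<and> cod2 K \<alpha> = g}"

text \<open>Whiskering: wr K alpha g is (alpha g), wl K h alpha is (h alpha).\<close>
definition wr :: "('o,'a,'c,'m) twocat_data_scheme \<Rightarrow> 'c \<Rightarrow> 'a \<Rightarrow> 'c" where
  "wr K \<alpha> g = hc K \<alpha> (id2 K g)"

definition wl :: "('o,'a,'c,'m) twocat_data_scheme \<Rightarrow> 'a \<Rightarrow> 'c \<Rightarrow> 'c" where
  "wl K h \<alpha> = hc K (id2 K h) \<alpha>"

locale twocat =
  fixes K :: "('o,'a,'c,'m) twocat_data_scheme"
  assumes arr_src: "f \<in> arr K \<Longrightarrow> src K f \<in> ob K"
      and arr_trg: "f \<in> arr K \<Longrightarrow> trg K f \<in> ob K"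
      and ide_hom: "A \<in> ob K \<Longrightarrow> ide K A \<in> hom K A A"
      and cmp_hom: "f \<in> hom K A B \<Longrightarrow> g \<in> hom K B C \<Longrightarrow> cmp K g f \<in> hom K A C"
      and cmp_ide_right: "f \<in> hom K A B \<Longrightarrow> cmp K f (ide K A) = f"
      and cmp_ide_left: "f \<in> hom K A B \<Longrightarrow> cmp K (ide K B) f = f"
      and cmp_assoc: "f \<in> hom K A B \<Longrightarrow> g \<in> hom K B C \<Longrightarrow> h \<in> hom K C D \<Longrightarrow>
                      cmp K h (cmp K g f) = cmp K (cmp K h g) f"
      and cell_dom: "\<alpha> \<in> cell K \<Longrightarrow> dom2 K \<alpha> \<in> arr K"
      and cell_cod: "\<alpha> \<in> cell K \<Longrightarrow> cod2 K \<alpha> \<in> arr K"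
      and cell_src: "\<alpha> \<in> cell K \<Longrightarrow> src K (dom2 K \<alpha>) = src K (cod2 K \<alpha>)"
      and cell_trg: "\<alpha> \<in> cell K \<Longrightarrow> trg K (dom2 K \<alpha>) = trg K (cod2 K \<alpha>)"
      and id2_cells: "f \<in> arr K \<Longrightarrow> id2 K f \<in> cells K f f"
      and vc_cells: "\<alpha> \<in> cells K f g \<Longrightarrow> \<beta> \<in> cells K g h \<Longrightarrow> vc K \<beta> \<alpha> \<in> cells K f h"
      and vc_id_right: "\<alpha> \<in> cells K f g \<Longrightarrow> vc K \<alpha> (id2 K f) = \<alpha>"
      and vc_id_left: "\<alpha> \<in> cells K f g \<Longrightarrow> vc K (id2 K g) \<alpha> = \<alpha>"
      and vc_assoc: "\<alpha> \<in> cells K f g \<Longrightarrow> \<beta> \<in> cells K g h \<Longrightarrow> \<gamma> \<in> cells K h k \<Longrightarrow>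
                     vc K \<gamma> (vc K \<beta> \<alpha>) = vc K (vc K \<gamma> \<beta>) \<alpha>"
      and hc_cells: "\<alpha> \<in> cells K f f' \<Longrightarrow> \<beta> \<in> cells K g g' \<Longrightarrow> trg K f = src K g \<Longrightarrow>
                     hc K \<beta> \<alpha> \<in> cells K (cmp K g f) (cmp K g' f')"
      and hc_id_right: "\<alpha> \<in> cell K \<Longrightarrow> hc K \<alpha> (id2 K (ide K (src K (dom2 K \<alpha>)))) = \<alpha>"
      and hc_id_left: "\<alpha> \<in> cell K \<Longrightarrow> hc K (id2 K (ide K (trg K (dom2 K \<alpha>)))) \<alpha> = \<alpha>"
      and hc_assoc: "\<alpha> \<in> cell K \<Longrightarrow> \<beta> \<in> cell K \<Longrightarrow> \<gamma> \<in> cell K \<Longrightarrow>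
                     trg K (dom2 K \<alpha>) = src K (dom2 K \<beta>) \<Longrightarrow> trg K (dom2 K \<beta>) = src K (dom2 K \<gamma>) \<Longrightarrow>
                     hc K \<gamma> (hc K \<beta> \<alpha>) = hc K (hc K \<gamma> \<beta>) \<alpha>"
      and hc_id2: "f \<in> hom K A B \<Longrightarrow> g \<in> hom K B C \<Longrightarrow>
                   hc K (id2 K g) (id2 K f) = id2 K (cmp K g f)"
      and interchange: "\<alpha> \<in> cells K f f' \<Longrightarrow> \<alpha>' \<in> cells K f' f'' \<Longrightarrow>
                        \<beta> \<in> cells K g g' \<Longrightarrow> \<beta>' \<in> cells K g' g'' \<Longrightarrow> trg K f = src K g \<Longrightarrow>
                        hc K (vc K \<beta>' \<beta>) (vc K \<alpha>' \<alpha>) = vc K (hc K \<beta>' \<alpha>') (hc K \<beta> \<alpha>)"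

definition iso2 :: "('o,'a,'c,'m) twocat_data_scheme \<Rightarrow> 'c \<Rightarrow> bool" where
  "iso2 K \<alpha> \<longleftrightarrow> \<alpha> \<in> cell K \<and>
     (\<exists>\<beta> \<in> cells K (cod2 K \<alpha>) (dom2 K \<alpha>).
        vc K \<beta> \<alpha> = id2 K (dom2 K \<alpha>) \<and> vc K \<alpha> \<beta> = id2 K (cod2 K \<alpha>))"

definition left_ext :: "('o,'a,'c,'m) twocat_data_scheme \<Rightarrow> 'a \<Rightarrow> 'a \<Rightarrow> 'a \<Rightarrow> 'c \<Rightarrow> bool" where
  "left_ext K f g h \<phi> \<longleftrightarrow>
     (\<forall>k \<in> hom K (trg K g) (trg K f).
        bij_betw (\<lambda>\<kappa>. vc K (wr K \<kappa> g) \<phi>) (cells K h k) (cells K f (cmp K k g)))"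

definition left_lift :: "('o,'a,'c,'m) twocat_data_scheme \<Rightarrow> 'a \<Rightarrow> 'a \<Rightarrow> 'a \<Rightarrow> 'c \<Rightarrow> bool" where
  "left_lift K f h g \<phi> \<longleftrightarrow>
     (\<forall>k \<in> hom K (src K g) (trg K g).
        bij_betw (\<lambda>\<kappa>. vc K (wl K h \<kappa>) \<phi>) (cells K g k) (cells K f (cmp K h k)))"

definition abs_left_lift :: "('o,'a,'c,'m) twocat_data_scheme \<Rightarrow> 'a \<Rightarrow> 'a \<Rightarrow> 'a \<Rightarrow> 'c \<Rightarrow> bool" where
  "abs_left_lift K f h g \<phi> \<longleftrightarrow>
     (\<forall>D. \<forall>j \<in> hom K D (src K g).
        left_lift K (cmp K f j) h (cmp K g j) (wr K \<phi> j))"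

definition is_comma ::
  "('o,'a,'c,'m) twocat_data_scheme \<Rightarrow> 'a \<Rightarrow> 'a \<Rightarrow> 'o \<Rightarrow> 'a \<Rightarrow> 'a \<Rightarrow> 'c \<Rightarrow> bool" where
  "is_comma K f g P p q lam \<longleftrightarrow>
     f \<in> arr K \<and> g \<in> arr K \<and> trg K f = trg K g \<and>
     p \<in> hom K P (src K f) \<and> q \<in> hom K P (src K g) \<and>
     lam \<in> cells K (cmp K f p) (cmp K g q) \<and>
     (\<forall>X a c \<alpha>. a \<in> hom K X (src K f) \<longrightarrow> c \<in> hom K X (src K g) \<longrightarrow>
        \<alpha> \<in> cells K (cmp K f a) (cmp K g c) \<longrightarrow>
        (\<exists>!u. u \<in> hom K X P \<and> cmp K p u = a \<and> cmp K q u = c \<and> wr K lam u = \<alpha>)) \<and>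
     (\<forall>X u v \<sigma> \<tau>. u \<in> hom K X P \<longrightarrow> v \<in> hom K X P \<longrightarrow>
        \<sigma> \<in> cells K (cmp K p u) (cmp K p v) \<longrightarrow> \<tau> \<in> cells K (cmp K q u) (cmp K q v) \<longrightarrow>
        vc K (wl K g \<tau>) (wr K lam u) = vc K (wr K lam v) (wl K f \<sigma>) \<longrightarrow>
        (\<exists>!\<theta>. \<theta> \<in> cells K u v \<and> wl K p \<theta> = \<sigma> \<and> wl K q \<theta> = \<tau>))"

definition is_pullback ::
  "('o,'a,'c,'m) twocat_data_scheme \<Rightarrow> 'a \<Rightarrow> 'a \<Rightarrow> 'o \<Rightarrow> 'a \<Rightarrow> 'a \<Rightarrow> bool" where
  "is_pullback K f g P p q \<longleftrightarrow>
     f \<in> arr K \<and> g \<in> arr K \<and> trg K f = trg K g \<and>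
     p \<in> hom K P (src K f) \<and> q \<in> hom K P (src K g) \<and> cmp K f p = cmp K g q \<and>
     (\<forall>X a b. a \<in> hom K X (src K f) \<longrightarrow> b \<in> hom K X (src K g) \<longrightarrow>
        cmp K f a = cmp K g b \<longrightarrow>
        (\<exists>!u. u \<in> hom K X P \<and> cmp K p u = a \<and> cmp K q u = b)) \<and>
     (\<forall>X u v \<sigma> \<tau>. u \<in> hom K X P \<longrightarrow> v \<in> hom K X P \<longrightarrow>
        \<sigma> \<in> cells K (cmp K p u) (cmp K p v) \<longrightarrow> \<tau> \<in> cells K (cmp K q u) (cmp K q v) \<longrightarrow>
        wl K f \<sigma> = wl K g \<tau> \<longrightarrow>
        (\<exists>!\<theta>. \<theta> \<in> cells K u v \<and> wl K p \<theta> = \<sigma> \<and> wl K q \<theta> = \<tau>))"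

definition is_terminal :: "('o,'a,'c,'m) twocat_data_scheme \<Rightarrow> 'o \<Rightarrow> bool" where
  "is_terminal K T \<longleftrightarrow> T \<in> ob K \<and>
     (\<forall>X \<in> ob K. \<exists>t. hom K X T = {t} \<and> cells K t t = {id2 K t})"

text \<open>Finite completeness of a 2-category: by Street's theorem, finite (weighted)
  2-limits are generated by a terminal object, pullbacks and cotensors with 2;
  cotensors with 2 are exactly the comma objects of identities, so we require a
  terminal object, all 2-pullbacks and all comma objects.\<close>
definition finitely_complete :: "('o,'a,'c,'m) twocat_data_scheme \<Rightarrow> bool" where
  "finitely_complete K \<longleftrightarrow>
     (\<exists>T. is_terminal K T) \<and>
     (\<forall>f g. f \<in> arr K \<longrightarrow> g \<in> arr K \<longrightarrow> trg K f = trg K g \<longrightarrow>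
        (\<exists>P p q. is_pullback K f g P p q)) \<and>
     (\<forall>f g. f \<in> arr K \<longrightarrow> g \<in> arr K \<longrightarrow> trg K f = trg K g \<longrightarrow>
        (\<exists>P p q lam. is_comma K f g P p q lam))"

definition pointwise_left_ext :: "('o,'a,'c,'m) twocat_data_scheme \<Rightarrow> 'a \<Rightarrow> 'a \<Rightarrow> 'a \<Rightarrow> 'c \<Rightarrow> bool" where
  "pointwise_left_ext K f g h \<phi> \<longleftrightarrow>
     (\<forall>X c P p q lam. c \<in> hom K X (trg K g) \<longrightarrow> is_comma K g c P p q lam \<longrightarrow>
        left_ext K (cmp K f p) q (cmp K h c) (vc K (wl K h lam) (wr K \<phi> p)))"

record ('o,'a,'c) yoneda_data =
  adm  :: "'a set"
  PP   :: "'o \<Rightarrow> 'o"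
  yon  :: "'o \<Rightarrow> 'a"
  YF   :: "'a \<Rightarrow> 'a"        \<comment> \<open>for f : A -> B, the 1-cell B(f,1) : B -> PA\<close>
  chi  :: "'a \<Rightarrow> 'c"        \<comment> \<open>chi^f : y_A => B(f,1) f\<close>

definition adm_ob :: "('o,'a,'c,'m) twocat_data_scheme \<Rightarrow> ('o,'a,'c) yoneda_data \<Rightarrow> 'o \<Rightarrow> bool" where
  "adm_ob K Y A \<longleftrightarrow> A \<in> ob K \<and> ide K A \<in> adm Y"

definition good_yoneda :: "('o,'a,'c,'m) twocat_data_scheme \<Rightarrow> ('o,'a,'c) yoneda_data \<Rightarrow> bool" where
  "good_yoneda K Y \<longleftrightarrow>
     adm Y \<subseteq> arr K \<and>
     (\<forall>f g. f \<in> adm Y \<longrightarrow> g \<in> arr K \<longrightarrow> trg K g = src K f \<longrightarrow> cmp K f g \<in> adm Y) \<and>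
     (\<forall>A. adm_ob K Y A \<longrightarrow> PP Y A \<in> ob K \<and> yon Y A \<in> hom K A (PP Y A) \<and> yon Y A \<in> adm Y) \<and>
     (\<forall>A B f. adm_ob K Y A \<longrightarrow> f \<in> hom K A B \<longrightarrow> f \<in> adm Y \<longrightarrow>
        YF Y f \<in> hom K B (PP Y A) \<and>
        chi Y f \<in> cells K (yon Y A) (cmp K (YF Y f) f) \<and>
        abs_left_lift K (yon Y A) (YF Y f) f (chi Y f)) \<and>
     (\<forall>A B f k \<psi>. adm_ob K Y A \<longrightarrow> f \<in> hom K A B \<longrightarrow> f \<in> adm Y \<longrightarrow>
        k \<in> hom K B (PP Y A) \<longrightarrow> \<psi> \<in> cells K (yon Y A) (cmp K k f) \<longrightarrow>
        abs_left_lift K (yon Y A) k f \<psi> \<longrightarrow>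
        pointwise_left_ext K (yon Y A) f k \<psi>)"

end

theory Submission
  imports Defs
begin

(* Whiskering with C(f,1) turns the universal properties of phi into statements about
   2-cells into C(f,1) h, and the defining equation (C(f,1) phi) . chi^f = (phi' g) . chi^g
   identifies the two sides.  For (1) and (2), paste phi with a lax square lam : g p => c q
   (the identity square for (1), the comma squares g/c for (2)).  Composing the universal map
   of (h lam) . (phi p) with the bijection given by the absolute lifting chi^f p, and that of
   phi' c with the bijection given by the left extension (B(g,1) lam) . (chi^g p), produces
   the same map, so one is bijective iff the other is.
   For (3), absolute left liftings paste and cancel along chi^f, so phi is one iff
   psi = (C(f,1) phi) . chi^f = (phi' g) . chi^g is an absolute left lifting of y_A through
   C(f,1) h.  By axiom (ii) psi is then a left extension of y_A along g, as chi^g is, and phi'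
   is the comparison between them, hence invertible; conversely an invertible phi' transports
   the lifting chi^g to psi. *)

lemma bij_betw_square_iff:
  assumes "bij_betw r T U" "bij_betw r' T' U" "e ` S \<subseteq> T" "e' ` S \<subseteq> T'"
    and "\<And>s. s \<in> S \<Longrightarrow> r (e s) = r' (e' s)"
  shows "bij_betw e S T \<longleftrightarrow> bij_betw e' S T'"
proof -
  have "bij_betw e S T \<longleftrightarrow> bij_betw (r \<circ> e) S U"
    by (rule bij_betw_comp_iff2[OF assms(1,3)])
  also have "\<dots> \<longleftrightarrow> bij_betw (r' \<circ> e') S U"
    by (rule bij_betw_cong) (simp add: assms(5))
  also have "\<dots> \<longleftrightarrow> bij_betw e' S T'"
    by (rule bij_betw_comp_iff2[OF assms(2,4), symmetric])
  finally show ?thesis .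
qed

lemma bij_betw_cancel_inj_on:
  assumes "bij_betw (r \<circ> e) S U" "inj_on r T" "e ` S \<subseteq> T" "r ` T \<subseteq> U"
  shows "bij_betw e S T"
proof (rule bij_betw_imageI)
  show "inj_on e S"
    using assms(1) by (auto simp: bij_betw_def dest: inj_on_imageI2)
  show "e ` S = T"
  proof
    show "T \<subseteq> e ` S"
    proof
      fix t assume "t \<in> T"
      then obtain s where "s \<in> S" "r t = r (e s)"
        using assms(1,4) by (force simp: bij_betw_def)
      then show "t \<in> e ` S"
        using assms(2,3) \<open>t \<in> T\<close> by (auto dest: inj_onD)
    qed
  qed (use assms(3) in blast)
qed

context twocat
begin

lemma homD: "f \<in> hom K A B \<Longrightarrow> f \<in> arr K \<and> src K f = A \<and> trg K f = B"
  by (simp add: hom_def)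

lemma cellsD: "\<alpha> \<in> cells K f g \<Longrightarrow> \<alpha> \<in> cell K \<and> dom2 K \<alpha> = f \<and> cod2 K \<alpha> = g"
  by (simp add: cells_def)

lemma cells_cod_hom: "\<alpha> \<in> cells K f g \<Longrightarrow> f \<in> hom K A B \<Longrightarrow> g \<in> hom K A B"
  using cell_cod cell_src cell_trg by (auto simp: cells_def hom_def)

lemma cells_dom_hom: "\<alpha> \<in> cells K f g \<Longrightarrow> g \<in> hom K A B \<Longrightarrow> f \<in> hom K A B"
  using cell_dom cell_src cell_trg by (auto simp: cells_def hom_def)

lemma id2_cells_hom: "f \<in> hom K A B \<Longrightarrow> id2 K f \<in> cells K f f"
  using id2_cells homD by blast

lemma wr_cells: "\<alpha> \<in> cells K f g \<Longrightarrow> f \<in> hom K A B \<Longrightarrow> j \<in> hom K D A \<Longrightarrow>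
    wr K \<alpha> j \<in> cells K (cmp K f j) (cmp K g j)"
  unfolding wr_def by (rule hc_cells) (auto dest: homD intro: id2_cells_hom)

lemma wl_cells: "\<alpha> \<in> cells K f g \<Longrightarrow> f \<in> hom K A B \<Longrightarrow> h \<in> hom K B C \<Longrightarrow>
    wl K h \<alpha> \<in> cells K (cmp K h f) (cmp K h g)"
  unfolding wl_def by (rule hc_cells) (auto dest: homD intro: id2_cells_hom)

lemma wl_vc: "\<alpha> \<in> cells K f g \<Longrightarrow> \<beta> \<in> cells K g k \<Longrightarrow> f \<in> hom K A B \<Longrightarrow> h \<in> hom K B C \<Longrightarrow>
    wl K h (vc K \<beta> \<alpha>) = vc K (wl K h \<beta>) (wl K h \<alpha>)"
  unfolding wl_def
  using interchange[of \<alpha> f g \<beta> k "id2 K h" h h "id2 K h" h] vc_id_left[of "id2 K h" h h]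
  by (auto dest: homD intro: id2_cells_hom)

lemma wr_vc: "\<alpha> \<in> cells K f g \<Longrightarrow> \<beta> \<in> cells K g k \<Longrightarrow> f \<in> hom K A B \<Longrightarrow> j \<in> hom K D A \<Longrightarrow>
    wr K (vc K \<beta> \<alpha>) j = vc K (wr K \<beta> j) (wr K \<alpha> j)"
  unfolding wr_def
  using interchange[of "id2 K j" j j "id2 K j" j \<alpha> f g \<beta> k] vc_id_left[of "id2 K j" j j]
  by (auto dest: homD intro: id2_cells_hom)

lemma wl_wl: "\<alpha> \<in> cells K f g \<Longrightarrow> f \<in> hom K A B \<Longrightarrow> h \<in> hom K B C \<Longrightarrow> k \<in> hom K C D \<Longrightarrow>
    wl K k (wl K h \<alpha>) = wl K (cmp K k h) \<alpha>"
  unfolding wl_def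
  using hc_assoc[of \<alpha> "id2 K h" "id2 K k"] hc_id2[of h B C k D] id2_cells
  by (auto dest!: homD cellsD simp: cells_def)

lemma wr_wr: "\<alpha> \<in> cells K f g \<Longrightarrow> f \<in> hom K A B \<Longrightarrow> j \<in> hom K D A \<Longrightarrow> i \<in> hom K E D \<Longrightarrow>
    wr K (wr K \<alpha> j) i = wr K \<alpha> (cmp K j i)"
  unfolding wr_def
  using hc_assoc[of "id2 K i" "id2 K j" \<alpha>] hc_id2[of i E D j A] id2_cells
  by (auto dest!: homD cellsD simp: cells_def)

lemma wl_wr: "\<alpha> \<in> cells K f g \<Longrightarrow> f \<in> hom K A B \<Longrightarrow> j \<in> hom K D A \<Longrightarrow> h \<in> hom K B C \<Longrightarrow>
    wl K h (wr K \<alpha> j) = wr K (wl K h \<alpha>) j"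
  unfolding wr_def wl_def
  using hc_assoc[of "id2 K j" \<alpha> "id2 K h"] id2_cells
  by (auto dest!: homD cellsD simp: cells_def)

lemma wr_ide: "\<alpha> \<in> cells K f g \<Longrightarrow> f \<in> hom K A B \<Longrightarrow> wr K \<alpha> (ide K A) = \<alpha>"
  unfolding wr_def using hc_id_right[of \<alpha>] by (auto dest!: homD cellsD)

lemma wl_id2: "f \<in> hom K A B \<Longrightarrow> h \<in> hom K B C \<Longrightarrow> wl K h (id2 K f) = id2 K (cmp K h f)"
  unfolding wl_def by (rule hc_id2)

lemma wr_id2: "f \<in> hom K A B \<Longrightarrow> h \<in> hom K B C \<Longrightarrow> wr K (id2 K h) f = id2 K (cmp K h f)"
  unfolding wr_def by (rule hc_id2)

lemma whisker_exchange:
  assumes "\<alpha> \<in> cells K f f'" "f \<in> hom K A B" "\<beta> \<in> cells K g g'" "g \<in> hom K B C"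
  shows "vc K (wr K \<beta> f') (wl K g \<alpha>) = vc K (wl K g' \<alpha>) (wr K \<beta> f)"
proof -
  have f': "f' \<in> hom K A B" and g': "g' \<in> hom K B C"
    using assms cells_cod_hom by blast+
  have "vc K (wr K \<beta> f') (wl K g \<alpha>) = hc K (vc K \<beta> (id2 K g)) (vc K (id2 K f') \<alpha>)"
    unfolding wr_def wl_def
    by (rule interchange[symmetric]) (use assms f' in \<open>auto intro: id2_cells_hom dest: homD\<close>)
  also have "\<dots> = hc K (vc K (id2 K g') \<beta>) (vc K \<alpha> (id2 K f))"
    using assms vc_id_left vc_id_right by simp
  also have "\<dots> = vc K (wl K g' \<alpha>) (wr K \<beta> f)"
    unfolding wr_def wl_def
    by (rule interchange) (use assms g' in \<open>auto intro: id2_cells_hom dest: homD\<close>)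
  finally show ?thesis .
qed

lemma left_ext_iff:
  assumes "f \<in> hom K A C" "g \<in> hom K A B"
  shows "left_ext K f g h \<phi> \<longleftrightarrow>
    (\<forall>k \<in> hom K B C. bij_betw (\<lambda>\<kappa>. vc K (wr K \<kappa> g) \<phi>) (cells K h k) (cells K f (cmp K k g)))"
  using assms by (simp add: left_ext_def hom_def)

lemma left_lift_iff:
  assumes "g \<in> hom K A B"
  shows "left_lift K f h g \<phi> \<longleftrightarrow>
    (\<forall>k \<in> hom K A B. bij_betw (\<lambda>\<kappa>. vc K (wl K h \<kappa>) \<phi>) (cells K g k) (cells K f (cmp K h k)))"
  using assms by (simp add: left_lift_def hom_def)

lemma abs_left_lift_iff:
  assumes "g \<in> hom K A B"
  shows "abs_left_lift K f h g \<phi> \<longleftrightarrow>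
    (\<forall>D. \<forall>j \<in> hom K D A. left_lift K (cmp K f j) h (cmp K g j) (wr K \<phi> j))"
  using assms by (simp add: abs_left_lift_def hom_def)

lemma pointwise_left_ext_iff:
  assumes "g \<in> hom K A B"
  shows "pointwise_left_ext K f g h \<phi> \<longleftrightarrow>
    (\<forall>X. \<forall>c \<in> hom K X B. \<forall>P p q lam. is_comma K g c P p q lam \<longrightarrow>
       left_ext K (cmp K f p) q (cmp K h c) (vc K (wl K h lam) (wr K \<phi> p)))"
  using assms by (auto simp add: pointwise_left_ext_def hom_def)

lemma is_comma_hom:
  assumes "is_comma K g c P p q lam" "g \<in> hom K A B" "c \<in> hom K X B"
  shows "p \<in> hom K P A" "q \<in> hom K P X" "lam \<in> cells K (cmp K g p) (cmp K c q)"
  using assms(1) homD[OF assms(2)] homD[OF assms(3)] unfolding is_comma_def by auto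

lemma comma_exists:
  assumes "finitely_complete K" "g \<in> hom K A B" "c \<in> hom K X B"
  obtains P p q lam where "is_comma K g c P p q lam"
  using assms(1) homD[OF assms(2)] homD[OF assms(3)] that unfolding finitely_complete_def by metis

lemma is_comma_lift:
  assumes "is_comma K g c P p q lam" "g \<in> hom K A B" "c \<in> hom K X B"
    and "a \<in> hom K W A" "b \<in> hom K W X" "\<alpha> \<in> cells K (cmp K g a) (cmp K c b)"
  obtains u where "u \<in> hom K W P" "cmp K p u = a" "cmp K q u = b" "wr K lam u = \<alpha>"
proof -
  have "\<forall>W a b \<alpha>. a \<in> hom K W A \<longrightarrow> b \<in> hom K W X \<longrightarrow> \<alpha> \<in> cells K (cmp K g a) (cmp K c b) \<longrightarrow>
      (\<exists>!u. u \<in> hom K W P \<and> cmp K p u = a \<and> cmp K q u = b \<and> wr K lam u = \<alpha>)"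
    using assms(1) homD[OF assms(2)] homD[OF assms(3)] unfolding is_comma_def by simp
  then show ?thesis
    using assms(4-) that by blast
qed

lemma comma_ide_section:
  assumes "is_comma K g (ide K B) P p q lam" "g \<in> hom K A B"
  obtains i where "i \<in> hom K A P" "cmp K p i = ide K A" "cmp K q i = g" "wr K lam i = id2 K g"
proof -
  have iA: "ide K A \<in> hom K A A" and iB: "ide K B \<in> hom K B B"
    using assms(2) homD arr_src arr_trg ide_hom by metis+
  moreover have "id2 K g \<in> cells K (cmp K g (ide K A)) (cmp K (ide K B) g)"
    using assms(2) id2_cells_hom cmp_ide_left cmp_ide_right by simp
  ultimately show ?thesis
    using is_comma_lift[OF assms(1,2) iB iA assms(2)] that by blast
qed

lemma vc_wr_vc:
  assumes "\<alpha> \<in> cells K e (cmp K h g)" "\<sigma> \<in> cells K h k" "\<tau> \<in> cells K k l"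
    and "h \<in> hom K B C" "g \<in> hom K A B"
  shows "vc K (wr K (vc K \<tau> \<sigma>) g) \<alpha> = vc K (wr K \<tau> g) (vc K (wr K \<sigma> g) \<alpha>)"
proof -
  have k: "k \<in> hom K B C"
    using assms cells_cod_hom by blast
  show ?thesis
    using wr_vc[OF assms(2,3,4,5)]
      vc_assoc[OF assms(1) wr_cells[OF assms(2,4,5)] wr_cells[OF assms(3) k assms(5)]] by simp
qed

lemma vc_wr_id2:
  assumes "\<alpha> \<in> cells K e (cmp K h g)" "h \<in> hom K B C" "g \<in> hom K A B"
  shows "vc K (wr K (id2 K h) g) \<alpha> = \<alpha>"
  using wr_id2[OF assms(3,2)] vc_id_left[OF assms(1)] by simp

lemma iso2_wr:
  assumes "iso2 K \<sigma>" "\<sigma> \<in> cells K G G'" "G \<in> hom K B E" "k \<in> hom K D B"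
  shows "iso2 K (wr K \<sigma> k)"
proof -
  obtain \<tau> where \<tau>: "\<tau> \<in> cells K G' G" "vc K \<tau> \<sigma> = id2 K G" "vc K \<sigma> \<tau> = id2 K G'"
    using assms(1,2) cellsD unfolding iso2_def by metis
  have G': "G' \<in> hom K B E"
    using assms(2,3) cells_cod_hom by blast
  have "wr K \<tau> k \<in> cells K (cmp K G' k) (cmp K G k)"
    using wr_cells[OF \<tau>(1) G' assms(4)] .
  moreover have "vc K (wr K \<tau> k) (wr K \<sigma> k) = id2 K (cmp K G k)"
    using wr_vc[OF assms(2) \<tau>(1) assms(3,4)] \<tau>(2) wr_id2[OF assms(4,3)] by simp
  moreover have "vc K (wr K \<sigma> k) (wr K \<tau> k) = id2 K (cmp K G' k)"
    using wr_vc[OF \<tau>(1) assms(2) G' assms(4)] \<tau>(3) wr_id2[OF assms(4) G'] by simp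
  ultimately show ?thesis
    using wr_cells[OF assms(2,3,4)] cellsD unfolding iso2_def by metis
qed

lemma bij_betw_vc_iso:
  assumes "iso2 K \<sigma>" "\<sigma> \<in> cells K G G'"
  shows "bij_betw (vc K \<sigma>) (cells K x G) (cells K x G')"
proof -
  obtain \<tau> where \<tau>: "\<tau> \<in> cells K G' G" "vc K \<tau> \<sigma> = id2 K G" "vc K \<sigma> \<tau> = id2 K G'"
    using assms cellsD unfolding iso2_def by metis
  show ?thesis
  proof (rule bij_betw_byWitness[where f' = "vc K \<tau>"])
    show "\<forall>\<alpha> \<in> cells K x G. vc K \<tau> (vc K \<sigma> \<alpha>) = \<alpha>"
      using vc_assoc[OF _ assms(2) \<tau>(1)] \<tau>(2) vc_id_left by simp
    show "\<forall>\<alpha> \<in> cells K x G'. vc K \<sigma> (vc K \<tau> \<alpha>) = \<alpha>"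
      using vc_assoc[OF _ \<tau>(1) assms(2)] \<tau>(3) vc_id_left by simp
  qed (use assms(2) \<tau>(1) vc_cells in blast)+
qed

lemma left_ext_comparison_iso:
  assumes "left_ext K f g h \<alpha>" "left_ext K f g k \<beta>"
    and \<alpha>: "\<alpha> \<in> cells K f (cmp K h g)" and \<beta>: "\<beta> \<in> cells K f (cmp K k g)"
    and f: "f \<in> hom K A C" and g: "g \<in> hom K A B" and h: "h \<in> hom K B C" and k: "k \<in> hom K B C"
    and \<sigma>: "\<sigma> \<in> cells K h k" and \<sigma>\<alpha>: "vc K (wr K \<sigma> g) \<alpha> = \<beta>"
  shows "iso2 K \<sigma>"
proof -
  have ext\<alpha>: "bij_betw (\<lambda>\<kappa>. vc K (wr K \<kappa> g) \<alpha>) (cells K h l) (cells K f (cmp K l g))"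
    and ext\<beta>: "bij_betw (\<lambda>\<kappa>. vc K (wr K \<kappa> g) \<beta>) (cells K k l) (cells K f (cmp K l g))"
    if "l \<in> hom K B C" for l
    using assms(1,2) that f g by (simp_all add: left_ext_iff)
  obtain \<tau> where \<tau>: "\<tau> \<in> cells K k h" and \<tau>\<beta>: "vc K (wr K \<tau> g) \<beta> = \<alpha>"
    using bij_betw_imp_surj_on[OF ext\<beta>[OF h]] \<alpha> by force
  have "vc K (wr K (vc K \<tau> \<sigma>) g) \<alpha> = vc K (wr K (id2 K h) g) \<alpha>"
    using vc_wr_vc[OF \<alpha> \<sigma> \<tau> h g] \<sigma>\<alpha> \<tau>\<beta> vc_wr_id2[OF \<alpha> h g] by simp
  then have \<tau>\<sigma>: "vc K \<tau> \<sigma> = id2 K h"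
    using inj_onD[OF bij_betw_imp_inj_on[OF ext\<alpha>[OF h]]] vc_cells[OF \<sigma> \<tau>] id2_cells_hom[OF h]
    by blast
  have "vc K (wr K (vc K \<sigma> \<tau>) g) \<beta> = vc K (wr K (id2 K k) g) \<beta>"
    using vc_wr_vc[OF \<beta> \<tau> \<sigma> k g] \<sigma>\<alpha> \<tau>\<beta> vc_wr_id2[OF \<beta> k g] by simp
  then have \<sigma>\<tau>: "vc K \<sigma> \<tau> = id2 K k"
    using inj_onD[OF bij_betw_imp_inj_on[OF ext\<beta>[OF k]]] vc_cells[OF \<tau> \<sigma>] id2_cells_hom[OF k]
    by blast
  show ?thesis
    using \<tau> \<tau>\<sigma> \<sigma>\<tau> cellsD[OF \<sigma>] unfolding iso2_def by auto
qed

lemma comma_paste_natural: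
  assumes \<phi>: "\<phi> \<in> cells K f (cmp K h g)" and \<kappa>: "\<kappa> \<in> cells K h k"
    and f: "f \<in> hom K A C" and g: "g \<in> hom K A B" and h: "h \<in> hom K B C"
    and p: "p \<in> hom K P A" and lam: "lam \<in> cells K (cmp K g p) q"
  shows "vc K (wr K \<kappa> q) (vc K (wl K h lam) (wr K \<phi> p)) = vc K (wl K k lam) (wr K (vc K (wr K \<kappa> g) \<phi>) p)"
proof -
  have gp: "cmp K g p \<in> hom K P B"
    using cmp_hom[OF p g] .
  have q: "q \<in> hom K P B"
    using cells_cod_hom[OF lam gp] .
  have \<phi>p: "wr K \<phi> p \<in> cells K (cmp K f p) (cmp K h (cmp K g p))"
    using wr_cells[OF \<phi> f p] cmp_assoc[OF p g h] by simp
  have "vc K (wr K \<kappa> q) (vc K (wl K h lam) (wr K \<phi> p))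
      = vc K (vc K (wr K \<kappa> q) (wl K h lam)) (wr K \<phi> p)"
    using vc_assoc[OF \<phi>p wl_cells[OF lam gp h] wr_cells[OF \<kappa> h q]] .
  also have "\<dots> = vc K (vc K (wl K k lam) (wr K \<kappa> (cmp K g p))) (wr K \<phi> p)"
    using whisker_exchange[OF lam gp \<kappa> h] by simp
  also have "\<dots> = vc K (wl K k lam) (vc K (wr K (wr K \<kappa> g) p) (wr K \<phi> p))"
    using vc_assoc[OF \<phi>p wr_cells[OF \<kappa> h gp] wl_cells[OF lam gp cells_cod_hom[OF \<kappa> h]]]
      wr_wr[OF \<kappa> h g p] by simp
  also have "\<dots> = vc K (wl K k lam) (wr K (vc K (wr K \<kappa> g) \<phi>) p)"
    using wr_vc[OF \<phi> wr_cells[OF \<kappa> h g] f p] by simp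
  finally show ?thesis .
qed

lemma pointwise_left_ext_imp_left_ext:
  assumes "finitely_complete K" "pointwise_left_ext K f g h \<phi>"
    and \<phi>: "\<phi> \<in> cells K f (cmp K h g)"
    and f: "f \<in> hom K A C" and g: "g \<in> hom K A B" and h: "h \<in> hom K B C"
  shows "left_ext K f g h \<phi>"
proof -
  have iB: "ide K B \<in> hom K B B"
    using g homD arr_trg ide_hom by metis
  obtain P p q lam where comma: "is_comma K g (ide K B) P p q lam"
    using comma_exists[OF assms(1) g iB] .
  have p: "p \<in> hom K P A" and q: "q \<in> hom K P B" and lam: "lam \<in> cells K (cmp K g p) q"
    using is_comma_hom[OF comma g iB] cmp_ide_left by simp_all
  obtain i where i: "i \<in> hom K A P" "cmp K p i = ide K A" "wr K lam i = id2 K g"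
    using comma_ide_section[OF comma g] by metis
  have gp: "cmp K g p \<in> hom K P B"
    using cmp_hom[OF p g] .
  have "left_ext K (cmp K f p) q (cmp K h (ide K B)) (vc K (wl K h lam) (wr K \<phi> p))"
    using assms(2) comma iB unfolding pointwise_left_ext_iff[OF g] by blast
  then have pw: "left_ext K (cmp K f p) q h (vc K (wl K h lam) (wr K \<phi> p))"
    using cmp_ide_right[OF h] by simp
  show ?thesis
    unfolding left_ext_iff[OF f g]
  proof
    fix k assume k: "k \<in> hom K B C"
    \<comment> \<open>restriction along the comma object g/1; it is injective because of the section i\<close>
    define restrict where "restrict \<beta> = vc K (wl K k lam) (wr K \<beta> p)" for \<beta>
    have restrict_cells: "restrict \<beta> \<in> cells K (cmp K f p) (cmp K k q)"
      if \<beta>: "\<beta> \<in> cells K f (cmp K k g)" for \<beta>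
      unfolding restrict_def
      using wr_cells[OF \<beta> f p] wl_cells[OF lam gp k] cmp_assoc[OF p g k] vc_cells by simp
    have "wr K (restrict \<beta>) i = \<beta>" if \<beta>: "\<beta> \<in> cells K f (cmp K k g)" for \<beta>
      unfolding restrict_def
      using wr_vc[OF _ wl_cells[OF lam gp k] cmp_hom[OF p f] i(1)] wr_cells[OF \<beta> f p]
        cmp_assoc[OF p g k] wl_wr[OF lam gp i(1) k] i(3) wl_id2[OF g k]
        wr_wr[OF \<beta> f p i(1)] i(2) wr_ide[OF \<beta> f] vc_id_left[OF \<beta>] by simp
    then have restrict_inj: "inj_on restrict (cells K f (cmp K k g))"
      by (rule inj_on_inverseI)
    have restrict_ext: "restrict (vc K (wr K \<kappa> g) \<phi>) = vc K (wr K \<kappa> q) (vc K (wl K h lam) (wr K \<phi> p))"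
      if "\<kappa> \<in> cells K h k" for \<kappa>
      unfolding restrict_def using comma_paste_natural[OF \<phi> that f g h p lam] by simp
    have "bij_betw (\<lambda>\<kappa>. vc K (wr K \<kappa> q) (vc K (wl K h lam) (wr K \<phi> p)))
        (cells K h k) (cells K (cmp K f p) (cmp K k q))"
      using pw k left_ext_iff[OF cmp_hom[OF p f] q] by blast
    then have "bij_betw (restrict \<circ> (\<lambda>\<kappa>. vc K (wr K \<kappa> g) \<phi>))
        (cells K h k) (cells K (cmp K f p) (cmp K k q))"
      by (rule bij_betw_cong[THEN iffD1, rotated]) (simp add: restrict_ext)
    then show "bij_betw (\<lambda>\<kappa>. vc K (wr K \<kappa> g) \<phi>) (cells K h k) (cells K f (cmp K k g))"
      by (rule bij_betw_cancel_inj_on[OF _ restrict_inj])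
        (use restrict_cells vc_cells[OF \<phi> wr_cells[OF _ h g]] in blast)+
  qed
qed

lemma whisker_paste_lift:
  assumes \<chi>: "\<chi> \<in> cells K y (cmp K F f)" and \<phi>: "\<phi> \<in> cells K f (cmp K h g)"
    and f: "f \<in> hom K A C" and g: "g \<in> hom K A B" and h: "h \<in> hom K B C" and F: "F \<in> hom K C E"
    and j: "j \<in> hom K D A" and \<kappa>: "\<kappa> \<in> cells K (cmp K g j) k"
  shows "vc K (wl K F (vc K (wl K h \<kappa>) (wr K \<phi> j))) (wr K \<chi> j)
    = vc K (wl K (cmp K F h) \<kappa>) (wr K (vc K (wl K F \<phi>) \<chi>) j)"
proof -
  have y: "y \<in> hom K A E"
    using cells_dom_hom[OF \<chi> cmp_hom[OF f F]] .
  have gj: "cmp K g j \<in> hom K D B"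
    using cmp_hom[OF j g] .
  have F\<phi>: "wl K F \<phi> \<in> cells K (cmp K F f) (cmp K F (cmp K h g))"
    using wl_cells[OF \<phi> f F] .
  have \<phi>j: "wr K \<phi> j \<in> cells K (cmp K f j) (cmp K h (cmp K g j))"
    using wr_cells[OF \<phi> f j] cmp_assoc[OF j g h] by simp
  have F\<phi>j: "wr K (wl K F \<phi>) j \<in> cells K (cmp K F (cmp K f j)) (cmp K (cmp K F h) (cmp K g j))"
    using wr_cells[OF F\<phi> cmp_hom[OF f F] j] cmp_assoc[OF j f F]
      cmp_assoc[OF g h F] cmp_assoc[OF j g cmp_hom[OF h F]] by simp
  have \<chi>j: "wr K \<chi> j \<in> cells K (cmp K y j) (cmp K F (cmp K f j))"
    using wr_cells[OF \<chi> y j] cmp_assoc[OF j f F] by simp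
  have "vc K (wl K F (vc K (wl K h \<kappa>) (wr K \<phi> j))) (wr K \<chi> j)
      = vc K (vc K (wl K (cmp K F h) \<kappa>) (wr K (wl K F \<phi>) j)) (wr K \<chi> j)"
    using wl_vc[OF \<phi>j wl_cells[OF \<kappa> gj h] cmp_hom[OF j f] F]
      wl_wl[OF \<kappa> gj h F] wl_wr[OF \<phi> f j F] by simp
  also have "\<dots> = vc K (wl K (cmp K F h) \<kappa>) (vc K (wr K (wl K F \<phi>) j) (wr K \<chi> j))"
    using vc_assoc[OF \<chi>j F\<phi>j wl_cells[OF \<kappa> gj cmp_hom[OF h F]]] by simp
  also have "\<dots> = vc K (wl K (cmp K F h) \<kappa>) (wr K (vc K (wl K F \<phi>) \<chi>) j)"
    using wr_vc[OF \<chi> F\<phi> y j] by simp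
  finally show ?thesis .
qed

lemma whisker_paste_comma:
  assumes \<chi>: "\<chi> \<in> cells K y (cmp K F f)" and \<phi>: "\<phi> \<in> cells K f (cmp K h g)"
    and f: "f \<in> hom K A C" and g: "g \<in> hom K A B" and h: "h \<in> hom K B C" and F: "F \<in> hom K C E"
    and p: "p \<in> hom K P A" and q: "q \<in> hom K P X" and c: "c \<in> hom K X B"
    and lam: "lam \<in> cells K (cmp K g p) (cmp K c q)" and \<kappa>: "\<kappa> \<in> cells K (cmp K h c) k"
  shows "vc K (wl K F (vc K (wr K \<kappa> q) (vc K (wl K h lam) (wr K \<phi> p)))) (wr K \<chi> p)
    = vc K (wr K (wl K F \<kappa>) q) (vc K (wl K (cmp K F h) lam) (wr K (vc K (wl K F \<phi>) \<chi>) p))"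
proof -
  have hc: "cmp K h c \<in> hom K X C" and gp: "cmp K g p \<in> hom K P B"
    and Fh: "cmp K F h \<in> hom K B E" and y: "y \<in> hom K A E"
    using cmp_hom c h g p F cells_dom_hom[OF \<chi> cmp_hom[OF f F]] by blast+
  note assoc = cmp_assoc[OF p g h] cmp_assoc[OF q c h] cmp_assoc[OF p f F] cmp_assoc[OF g h F]
    cmp_assoc[OF p g Fh] cmp_assoc[OF q hc F] cmp_assoc[OF c h F] cmp_assoc[OF q c Fh]
  have \<phi>p: "wr K \<phi> p \<in> cells K (cmp K f p) (cmp K h (cmp K g p))"
    using wr_cells[OF \<phi> f p] assoc by simp
  have \<kappa>q: "wr K \<kappa> q \<in> cells K (cmp K h (cmp K c q)) (cmp K k q)"
    using wr_cells[OF \<kappa> hc q] assoc by simp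
  have F\<phi>p: "wr K (wl K F \<phi>) p \<in> cells K (cmp K F (cmp K f p)) (cmp K (cmp K F h) (cmp K g p))"
    using wr_cells[OF wl_cells[OF \<phi> f F] cmp_hom[OF f F] p] assoc by simp
  have \<chi>p: "wr K \<chi> p \<in> cells K (cmp K y p) (cmp K F (cmp K f p))"
    using wr_cells[OF \<chi> y p] assoc by simp
  have F\<kappa>q: "wr K (wl K F \<kappa>) q \<in> cells K (cmp K (cmp K F h) (cmp K c q)) (cmp K F (cmp K k q))"
    using wr_cells[OF wl_cells[OF \<kappa> hc F] cmp_hom[OF hc F] q] cells_cod_hom[OF \<kappa> hc] assoc
      cmp_assoc[OF q _ F] by simp
  have Fhlam: "wl K (cmp K F h) lam \<in> cells K (cmp K (cmp K F h) (cmp K g p)) (cmp K (cmp K F h) (cmp K c q))"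
    using wl_cells[OF lam gp Fh] .
  have "vc K (wl K F (vc K (wr K \<kappa> q) (vc K (wl K h lam) (wr K \<phi> p)))) (wr K \<chi> p)
      = vc K (vc K (wr K (wl K F \<kappa>) q) (vc K (wl K (cmp K F h) lam) (wr K (wl K F \<phi>) p))) (wr K \<chi> p)"
    using wl_vc[OF vc_cells[OF \<phi>p wl_cells[OF lam gp h]] \<kappa>q cmp_hom[OF p f] F]
      wl_vc[OF \<phi>p wl_cells[OF lam gp h] cmp_hom[OF p f] F]
      wl_wr[OF \<kappa> hc q F] wl_wl[OF lam gp h F] wl_wr[OF \<phi> f p F] by simp
  also have "\<dots> = vc K (wr K (wl K F \<kappa>) q) (vc K (wl K (cmp K F h) lam) (wr K (vc K (wl K F \<phi>) \<chi>) p))"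
    using vc_assoc[OF \<chi>p vc_cells[OF F\<phi>p Fhlam] F\<kappa>q] vc_assoc[OF \<chi>p F\<phi>p Fhlam]
      wr_vc[OF \<chi> wl_cells[OF \<phi> f F] y p] by simp
  finally show ?thesis .
qed

lemma abs_left_lift_paste_iff:
  assumes abs\<chi>: "abs_left_lift K y F f \<chi>" and \<chi>: "\<chi> \<in> cells K y (cmp K F f)"
    and \<phi>: "\<phi> \<in> cells K f (cmp K h g)"
    and f: "f \<in> hom K A C" and g: "g \<in> hom K A B" and h: "h \<in> hom K B C" and F: "F \<in> hom K C E"
  shows "abs_left_lift K f h g \<phi> \<longleftrightarrow> abs_left_lift K y (cmp K F h) g (vc K (wl K F \<phi>) \<chi>)"
proof -
  have bij_iff: "bij_betw (\<lambda>\<kappa>. vc K (wl K h \<kappa>) (wr K \<phi> j))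
        (cells K (cmp K g j) k) (cells K (cmp K f j) (cmp K h k))
    \<longleftrightarrow> bij_betw (\<lambda>\<kappa>. vc K (wl K (cmp K F h) \<kappa>) (wr K (vc K (wl K F \<phi>) \<chi>) j))
          (cells K (cmp K g j) k) (cells K (cmp K y j) (cmp K (cmp K F h) k))"
    if j: "j \<in> hom K D A" and k: "k \<in> hom K D B" for D j k
  proof -
    have "bij_betw (\<lambda>\<beta>. vc K (wl K F \<beta>) (wr K \<chi> j))
        (cells K (cmp K f j) (cmp K h k)) (cells K (cmp K y j) (cmp K F (cmp K h k)))"
      using abs\<chi> j cmp_hom[OF k h] left_lift_iff[OF cmp_hom[OF j f]]
      unfolding abs_left_lift_iff[OF f] by blast
    moreover have "(\<lambda>\<kappa>. vc K (wl K h \<kappa>) (wr K \<phi> j)) ` cells K (cmp K g j) k \<subseteq> cells K (cmp K f j) (cmp K h k)"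
      using vc_cells wr_cells[OF \<phi> f j] wl_cells[OF _ cmp_hom[OF j g] h] cmp_assoc[OF j g h] by auto
    ultimately have "bij_betw (\<lambda>\<kappa>. vc K (wl K h \<kappa>) (wr K \<phi> j))
        (cells K (cmp K g j) k) (cells K (cmp K f j) (cmp K h k))
      \<longleftrightarrow> bij_betw ((\<lambda>\<beta>. vc K (wl K F \<beta>) (wr K \<chi> j)) \<circ> (\<lambda>\<kappa>. vc K (wl K h \<kappa>) (wr K \<phi> j)))
            (cells K (cmp K g j) k) (cells K (cmp K y j) (cmp K F (cmp K h k)))"
      by (rule bij_betw_comp_iff2)
    also have "\<dots> \<longleftrightarrow> bij_betw (\<lambda>\<kappa>. vc K (wl K (cmp K F h) \<kappa>) (wr K (vc K (wl K F \<phi>) \<chi>) j))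
            (cells K (cmp K g j) k) (cells K (cmp K y j) (cmp K F (cmp K h k)))"
      by (rule bij_betw_cong) (simp add: whisker_paste_lift[OF \<chi> \<phi> f g h F j])
    finally show ?thesis
      using cmp_assoc[OF k h F] by simp
  qed
  have "left_lift K (cmp K f j) h (cmp K g j) (wr K \<phi> j)
    \<longleftrightarrow> left_lift K (cmp K y j) (cmp K F h) (cmp K g j) (wr K (vc K (wl K F \<phi>) \<chi>) j)"
    if j: "j \<in> hom K D A" for D j
    unfolding left_lift_iff[OF cmp_hom[OF j g]] using bij_iff[OF j] by blast
  then show ?thesis
    unfolding abs_left_lift_iff[OF g] by blast
qed

lemma whisker_transport:
  assumes \<chi>: "\<chi> \<in> cells K y (cmp K G g)" and \<sigma>: "\<sigma> \<in> cells K G G'"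
    and g: "g \<in> hom K A B" and G: "G \<in> hom K B E"
    and j: "j \<in> hom K D A" and \<kappa>: "\<kappa> \<in> cells K (cmp K g j) k"
  shows "vc K (wr K \<sigma> k) (vc K (wl K G \<kappa>) (wr K \<chi> j))
    = vc K (wl K G' \<kappa>) (wr K (vc K (wr K \<sigma> g) \<chi>) j)"
proof -
  have gj: "cmp K g j \<in> hom K D B"
    using cmp_hom[OF j g] .
  have y: "y \<in> hom K A E"
    using cells_dom_hom[OF \<chi> cmp_hom[OF g G]] .
  have \<chi>j: "wr K \<chi> j \<in> cells K (cmp K y j) (cmp K G (cmp K g j))"
    using wr_cells[OF \<chi> y j] cmp_assoc[OF j g G] by simp
  have "vc K (wr K \<sigma> k) (vc K (wl K G \<kappa>) (wr K \<chi> j))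
      = vc K (vc K (wr K \<sigma> k) (wl K G \<kappa>)) (wr K \<chi> j)"
    using vc_assoc[OF \<chi>j wl_cells[OF \<kappa> gj G] wr_cells[OF \<sigma> G cells_cod_hom[OF \<kappa> gj]]] .
  also have "\<dots> = vc K (wl K G' \<kappa>) (vc K (wr K \<sigma> (cmp K g j)) (wr K \<chi> j))"
    using whisker_exchange[OF \<kappa> gj \<sigma> G]
      vc_assoc[OF \<chi>j wr_cells[OF \<sigma> G gj] wl_cells[OF \<kappa> gj cells_cod_hom[OF \<sigma> G]]] by simp
  also have "\<dots> = vc K (wl K G' \<kappa>) (wr K (vc K (wr K \<sigma> g) \<chi>) j)"
    using wr_vc[OF \<chi> wr_cells[OF \<sigma> G g] y j] wr_wr[OF \<sigma> G g j] by simp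
  finally show ?thesis .
qed

lemma abs_left_lift_vc_iso:
  assumes abs\<chi>: "abs_left_lift K y G g \<chi>" and \<chi>: "\<chi> \<in> cells K y (cmp K G g)"
    and \<sigma>: "\<sigma> \<in> cells K G G'" and iso: "iso2 K \<sigma>"
    and g: "g \<in> hom K A B" and G: "G \<in> hom K B E"
  shows "abs_left_lift K y G' g (vc K (wr K \<sigma> g) \<chi>)"
proof -
  have "left_lift K (cmp K y j) G' (cmp K g j) (wr K (vc K (wr K \<sigma> g) \<chi>) j)"
    if j: "j \<in> hom K D A" for D j
    unfolding left_lift_iff[OF cmp_hom[OF j g]]
  proof
    fix k assume k: "k \<in> hom K D B"
    have "bij_betw (\<lambda>\<kappa>. vc K (wl K G \<kappa>) (wr K \<chi> j)) (cells K (cmp K g j) k) (cells K (cmp K y j) (cmp K G k))"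
      using abs\<chi> j k left_lift_iff[OF cmp_hom[OF j g]] unfolding abs_left_lift_iff[OF g] by blast
    then have "bij_betw (vc K (wr K \<sigma> k) \<circ> (\<lambda>\<kappa>. vc K (wl K G \<kappa>) (wr K \<chi> j)))
        (cells K (cmp K g j) k) (cells K (cmp K y j) (cmp K G' k))"
      using bij_betw_trans bij_betw_vc_iso[OF iso2_wr[OF iso \<sigma> G k] wr_cells[OF \<sigma> G k]] by blast
    moreover have "vc K (wr K \<sigma> k) (vc K (wl K G \<kappa>) (wr K \<chi> j))
        = vc K (wl K G' \<kappa>) (wr K (vc K (wr K \<sigma> g) \<chi>) j)"
      if "\<kappa> \<in> cells K (cmp K g j) k" for \<kappa>
      using whisker_transport[OF \<chi> \<sigma> g G j that] .
    ultimately show "bij_betw (\<lambda>\<kappa>. vc K (wl K G' \<kappa>) (wr K (vc K (wr K \<sigma> g) \<chi>) j))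
      (cells K (cmp K g j) k) (cells K (cmp K y j) (cmp K G' k))"
      by (simp add: comp_def cong: bij_betw_cong)
  qed
  then show ?thesis
    unfolding abs_left_lift_iff[OF g] by blast
qed

end

locale yoneda_structure = twocat K for K :: "('o,'a,'c,'m) twocat_data_scheme" +
  fixes Y :: "('o,'a,'c) yoneda_data"
  assumes finitely_complete: "finitely_complete K"
    and good_yoneda: "good_yoneda K Y"
begin

lemma yon_hom: "adm_ob K Y A \<Longrightarrow> yon Y A \<in> hom K A (PP Y A)"
  using good_yoneda unfolding good_yoneda_def by blast

lemma
  assumes "adm_ob K Y A" "f \<in> hom K A B" "f \<in> adm Y"
  shows YF_hom: "YF Y f \<in> hom K B (PP Y A)"
    and chi_cells: "chi Y f \<in> cells K (yon Y A) (cmp K (YF Y f) f)"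
    and abs_left_lift_chi: "abs_left_lift K (yon Y A) (YF Y f) f (chi Y f)"
  using good_yoneda assms unfolding good_yoneda_def by blast+

lemma pointwise_left_ext_if_abs_left_lift:
  assumes "adm_ob K Y A" "f \<in> hom K A B" "f \<in> adm Y" "k \<in> hom K B (PP Y A)"
    and "\<psi> \<in> cells K (yon Y A) (cmp K k f)" "abs_left_lift K (yon Y A) k f \<psi>"
  shows "pointwise_left_ext K (yon Y A) f k \<psi>"
  using good_yoneda assms unfolding good_yoneda_def by blast

lemma left_ext_if_abs_left_lift:
  assumes "adm_ob K Y A" "f \<in> hom K A B" "f \<in> adm Y" "k \<in> hom K B (PP Y A)"
    and "\<psi> \<in> cells K (yon Y A) (cmp K k f)" "abs_left_lift K (yon Y A) k f \<psi>"
  shows "left_ext K (yon Y A) f k \<psi>"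
  using pointwise_left_ext_imp_left_ext[OF finitely_complete pointwise_left_ext_if_abs_left_lift]
    assms yon_hom by blast

lemma left_ext_chi:
  assumes "adm_ob K Y A" "f \<in> hom K A B" "f \<in> adm Y"
  shows "left_ext K (yon Y A) f (YF Y f) (chi Y f)"
  using left_ext_if_abs_left_lift YF_hom chi_cells abs_left_lift_chi assms by blast

end

locale yoneda_mates = yoneda_structure K Y for K :: "('o,'a,'c,'m) twocat_data_scheme" and Y +
  fixes A B C f g h \<phi> \<phi>'
  assumes A_adm: "adm_ob K Y A"
    and f: "f \<in> hom K A C" and f_adm: "f \<in> adm Y"
    and g: "g \<in> hom K A B" and g_adm: "g \<in> adm Y"
    and h: "h \<in> hom K B C"
    and \<phi>: "\<phi> \<in> cells K f (cmp K h g)"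
    and \<phi>': "\<phi>' \<in> cells K (YF Y g) (cmp K (YF Y f) h)"
    and mate: "vc K (wl K (YF Y f) \<phi>) (chi Y f) = vc K (wr K \<phi>' g) (chi Y g)"
begin

(* The paper's y_A, C(f,1) and B(g,1); \<psi> is the common value of both sides of mate. *)
abbreviation "y \<equiv> yon Y A"
abbreviation "F \<equiv> YF Y f"
abbreviation "G \<equiv> YF Y g"
abbreviation "\<psi> \<equiv> vc K (wl K F \<phi>) (chi Y f)"

lemma y: "y \<in> hom K A (PP Y A)"
  using yon_hom[OF A_adm] .

lemma F: "F \<in> hom K C (PP Y A)" and \<chi>f: "chi Y f \<in> cells K y (cmp K F f)"
  using YF_hom chi_cells A_adm f f_adm by blast+

lemma G: "G \<in> hom K B (PP Y A)" and \<chi>g: "chi Y g \<in> cells K y (cmp K G g)"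
  using YF_hom chi_cells A_adm g g_adm by blast+

lemma \<psi>: "\<psi> \<in> cells K y (cmp K (cmp K F h) g)"
  using vc_cells[OF \<chi>f wl_cells[OF \<phi> f F]] cmp_assoc[OF g h F] by simp

lemma mate_paste_eq:
  assumes p: "p \<in> hom K P A" and q: "q \<in> hom K P X" and c: "c \<in> hom K X B"
    and lam: "lam \<in> cells K (cmp K g p) (cmp K c q)" and \<kappa>: "\<kappa> \<in> cells K (cmp K h c) k"
  shows "vc K (wl K F (vc K (wr K \<kappa> q) (vc K (wl K h lam) (wr K \<phi> p)))) (wr K (chi Y f) p)
    = vc K (wr K (vc K (wl K F \<kappa>) (wr K \<phi>' c)) q) (vc K (wl K G lam) (wr K (chi Y g) p))"
proof -
  have hc: "cmp K h c \<in> hom K X C" and gp: "cmp K g p \<in> hom K P B" and cq: "cmp K c q \<in> hom K P B"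
    and Fh: "cmp K F h \<in> hom K B (PP Y A)"
    using cmp_hom c h g p q F by blast+
  note assoc = cmp_assoc[OF p g G] cmp_assoc[OF c h F] cmp_assoc[OF q hc F] cmp_assoc[OF q c h]
    cmp_assoc[OF q c Fh] cmp_assoc[OF q cells_cod_hom[OF \<kappa> hc] F]
  have \<chi>gp: "wr K (chi Y g) p \<in> cells K (cmp K y p) (cmp K G (cmp K g p))"
    using wr_cells[OF \<chi>g y p] assoc by simp
  have \<phi>'c: "wr K \<phi>' c \<in> cells K (cmp K G c) (cmp K F (cmp K h c))"
    using wr_cells[OF \<phi>' G c] assoc by simp
  have \<phi>'cq: "wr K \<phi>' (cmp K c q) \<in> cells K (cmp K G (cmp K c q)) (cmp K (cmp K F h) (cmp K c q))"
    using wr_cells[OF \<phi>' G cq] .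
  have F\<kappa>q: "wr K (wl K F \<kappa>) q \<in> cells K (cmp K (cmp K F h) (cmp K c q)) (cmp K F (cmp K k q))"
    using wr_cells[OF wl_cells[OF \<kappa> hc F] cmp_hom[OF hc F] q] assoc by simp
  have "vc K (wl K F (vc K (wr K \<kappa> q) (vc K (wl K h lam) (wr K \<phi> p)))) (wr K (chi Y f) p)
      = vc K (wr K (wl K F \<kappa>) q) (vc K (wl K (cmp K F h) lam) (wr K \<psi> p))"
    by (rule whisker_paste_comma[OF \<chi>f \<phi> f g h F p q c lam \<kappa>])
  also have "\<dots> = vc K (wr K (wl K F \<kappa>) q)
      (vc K (wl K (cmp K F h) lam) (vc K (wr K \<phi>' (cmp K g p)) (wr K (chi Y g) p)))"
    using mate wr_vc[OF \<chi>g wr_cells[OF \<phi>' G g] y p] wr_wr[OF \<phi>' G g p] by simp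
  also have "\<dots> = vc K (wr K (wl K F \<kappa>) q) (vc K (wr K \<phi>' (cmp K c q)) (vc K (wl K G lam) (wr K (chi Y g) p)))"
    using vc_assoc[OF \<chi>gp wr_cells[OF \<phi>' G gp] wl_cells[OF lam gp Fh]]
      vc_assoc[OF \<chi>gp wl_cells[OF lam gp G] \<phi>'cq] whisker_exchange[OF lam gp \<phi>' G] by simp
  also have "\<dots> = vc K (wr K (vc K (wl K F \<kappa>) (wr K \<phi>' c)) q) (vc K (wl K G lam) (wr K (chi Y g) p))"
    using vc_assoc[OF vc_cells[OF \<chi>gp wl_cells[OF lam gp G]] \<phi>'cq F\<kappa>q]
      wr_vc[OF \<phi>'c wl_cells[OF \<kappa> hc F] cmp_hom[OF c G] q] wr_wr[OF \<phi>' G c q] assoc by simp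
  finally show ?thesis .
qed

lemma left_ext_paste_iff_left_lift:
  assumes p: "p \<in> hom K P A" and q: "q \<in> hom K P X" and c: "c \<in> hom K X B"
    and lam: "lam \<in> cells K (cmp K g p) (cmp K c q)"
    and ext: "left_ext K (cmp K y p) q (cmp K G c) (vc K (wl K G lam) (wr K (chi Y g) p))"
  shows "left_ext K (cmp K f p) q (cmp K h c) (vc K (wl K h lam) (wr K \<phi> p))
    \<longleftrightarrow> left_lift K (cmp K G c) F (cmp K h c) (wr K \<phi>' c)"
proof -
  have hc: "cmp K h c \<in> hom K X C" and gp: "cmp K g p \<in> hom K P B" and fp: "cmp K f p \<in> hom K P C"
    using cmp_hom c h g p f by blast+
  have \<phi>p: "vc K (wl K h lam) (wr K \<phi> p) \<in> cells K (cmp K f p) (cmp K h (cmp K c q))"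
    using vc_cells[OF _ wl_cells[OF lam gp h]] wr_cells[OF \<phi> f p] cmp_assoc[OF p g h] by simp
  have \<phi>'c: "wr K \<phi>' c \<in> cells K (cmp K G c) (cmp K F (cmp K h c))"
    using wr_cells[OF \<phi>' G c] cmp_assoc[OF c h F] by simp
  have "bij_betw (\<lambda>\<kappa>. vc K (wr K \<kappa> q) (vc K (wl K h lam) (wr K \<phi> p)))
        (cells K (cmp K h c) k) (cells K (cmp K f p) (cmp K k q))
    \<longleftrightarrow> bij_betw (\<lambda>\<kappa>. vc K (wl K F \<kappa>) (wr K \<phi>' c))
        (cells K (cmp K h c) k) (cells K (cmp K G c) (cmp K F k))"
    if k: "k \<in> hom K X C" for k
  proof (rule bij_betw_square_iff)
    show "bij_betw (\<lambda>\<beta>. vc K (wl K F \<beta>) (wr K (chi Y f) p))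
        (cells K (cmp K f p) (cmp K k q)) (cells K (cmp K y p) (cmp K F (cmp K k q)))"
      using abs_left_lift_chi[OF A_adm f f_adm] p cmp_hom[OF q k] left_lift_iff[OF fp]
      unfolding abs_left_lift_iff[OF f] by blast
    show "bij_betw (\<lambda>\<alpha>. vc K (wr K \<alpha> q) (vc K (wl K G lam) (wr K (chi Y g) p)))
        (cells K (cmp K G c) (cmp K F k)) (cells K (cmp K y p) (cmp K F (cmp K k q)))"
      using ext cmp_hom[OF k F] cmp_assoc[OF q k F] left_ext_iff[OF cmp_hom[OF p y] q] by auto
    show "(\<lambda>\<kappa>. vc K (wr K \<kappa> q) (vc K (wl K h lam) (wr K \<phi> p))) ` cells K (cmp K h c) k
        \<subseteq> cells K (cmp K f p) (cmp K k q)"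
      using vc_cells[OF \<phi>p] wr_cells[OF _ hc q] cmp_assoc[OF q c h] by auto
    show "(\<lambda>\<kappa>. vc K (wl K F \<kappa>) (wr K \<phi>' c)) ` cells K (cmp K h c) k \<subseteq> cells K (cmp K G c) (cmp K F k)"
      using vc_cells[OF \<phi>'c] wl_cells[OF _ hc F] by auto
  qed (use mate_paste_eq[OF p q c lam] in simp)
  then show ?thesis
    using left_ext_iff[OF fp q] left_lift_iff[OF hc] by simp
qed

lemma left_ext_iff_left_lift: "left_ext K f g h \<phi> \<longleftrightarrow> left_lift K G F h \<phi>'"
proof -
  have iA: "ide K A \<in> hom K A A" and iB: "ide K B \<in> hom K B B"
    using g homD arr_src arr_trg ide_hom by metis+
  \<comment> \<open>(1) is the case of the identity square\<close>
  have lam: "id2 K g \<in> cells K (cmp K g (ide K A)) (cmp K (ide K B) g)"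
    using id2_cells_hom[OF g] cmp_ide_left[OF g] cmp_ide_right[OF g] by simp
  have "left_ext K (cmp K y (ide K A)) g (cmp K G (ide K B))
      (vc K (wl K G (id2 K g)) (wr K (chi Y g) (ide K A)))"
    using left_ext_chi[OF A_adm g g_adm] cmp_ide_right[OF y] cmp_ide_right[OF G] wl_id2[OF g G]
      wr_ide[OF \<chi>g y] vc_id_left[OF \<chi>g] by simp
  then show ?thesis
    using left_ext_paste_iff_left_lift[OF iA g iB lam] cmp_ide_right[OF f] cmp_ide_right[OF h]
      cmp_ide_right[OF G] wl_id2[OF g h] wr_ide[OF \<phi> f] vc_id_left[OF \<phi>] wr_ide[OF \<phi>' G] by simp
qed

lemma pointwise_left_ext_iff_abs_left_lift:
  "pointwise_left_ext K f g h \<phi> \<longleftrightarrow> abs_left_lift K G F h \<phi>'"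
proof -
  have comma_iff: "left_ext K (cmp K f p) q (cmp K h c) (vc K (wl K h lam) (wr K \<phi> p))
      \<longleftrightarrow> left_lift K (cmp K G c) F (cmp K h c) (wr K \<phi>' c)"
    if c: "c \<in> hom K X B" and comma: "is_comma K g c P p q lam" for X c P p q lam
  proof (rule left_ext_paste_iff_left_lift[OF is_comma_hom(1,2)[OF comma g c] c
        is_comma_hom(3)[OF comma g c]])
    show "left_ext K (cmp K y p) q (cmp K G c) (vc K (wl K G lam) (wr K (chi Y g) p))"
      using pointwise_left_ext_if_abs_left_lift[OF A_adm g g_adm G \<chi>g]
        abs_left_lift_chi[OF A_adm g g_adm] c comma unfolding pointwise_left_ext_iff[OF g] by blast
  qed
  show ?thesis
    unfolding pointwise_left_ext_iff[OF g] abs_left_lift_iff[OF h]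
  proof (intro iffI allI ballI impI)
    fix X c assume "\<forall>X. \<forall>c\<in>hom K X B. \<forall>P p q lam. is_comma K g c P p q lam \<longrightarrow>
        left_ext K (cmp K f p) q (cmp K h c) (vc K (wl K h lam) (wr K \<phi> p))"
      and c: "c \<in> hom K X B"
    moreover obtain P p q lam where "is_comma K g c P p q lam"
      using comma_exists[OF finitely_complete g c] .
    ultimately show "left_lift K (cmp K G c) F (cmp K h c) (wr K \<phi>' c)"
      using comma_iff by blast
  next
    fix X c P p q lam
    assume "\<forall>D. \<forall>j\<in>hom K D B. left_lift K (cmp K G j) F (cmp K h j) (wr K \<phi>' j)"
      and "c \<in> hom K X B" "is_comma K g c P p q lam"
    then show "left_ext K (cmp K f p) q (cmp K h c) (vc K (wl K h lam) (wr K \<phi> p))"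
      using comma_iff by blast
  qed
qed

lemma abs_left_lift_iff_iso: "abs_left_lift K f h g \<phi> \<longleftrightarrow> iso2 K \<phi>'"
proof -
  have Fh: "cmp K F h \<in> hom K B (PP Y A)"
    using cmp_hom[OF h F] .
  have "abs_left_lift K f h g \<phi> \<longleftrightarrow> abs_left_lift K y (cmp K F h) g \<psi>"
    using abs_left_lift_paste_iff[OF abs_left_lift_chi[OF A_adm f f_adm] \<chi>f \<phi> f g h F] .
  also have "\<dots> \<longleftrightarrow> iso2 K \<phi>'"
  proof
    assume "abs_left_lift K y (cmp K F h) g \<psi>"
    then have "left_ext K y g (cmp K F h) \<psi>"
      by (rule left_ext_if_abs_left_lift[OF A_adm g g_adm Fh \<psi>])
    then show "iso2 K \<phi>'"
      using left_ext_comparison_iso[OF left_ext_chi[OF A_adm g g_adm] _ \<chi>g \<psi> y g G Fh \<phi>' mate[symmetric]]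
      by blast
  next
    assume "iso2 K \<phi>'"
    then show "abs_left_lift K y (cmp K F h) g \<psi>"
      unfolding mate by (rule abs_left_lift_vc_iso[OF abs_left_lift_chi[OF A_adm g g_adm] \<chi>g \<phi>' _ g G])
  qed
  finally show ?thesis .
qed

end

theorem lemma3p10:
  fixes K :: "('o,'a,'c,'m) twocat_data_scheme" and Y :: "('o,'a,'c) yoneda_data"
  assumes "twocat K" and "finitely_complete K" and "good_yoneda K Y"
    and "adm_ob K Y A"
    and "f \<in> hom K A C" and "f \<in> adm Y"
    and "g \<in> hom K A B" and "g \<in> adm Y"
    and "h \<in> hom K B C"
    and "\<phi> \<in> cells K f (cmp K h g)"
    and "\<phi>' \<in> cells K (YF Y g) (cmp K (YF Y f) h)"
    and "vc K (wl K (YF Y f) \<phi>) (chi Y f) = vc K (wr K \<phi>' g) (chi Y g)"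
  shows "(left_ext K f g h \<phi> \<longleftrightarrow> left_lift K (YF Y g) (YF Y f) h \<phi>') \<and>
         (pointwise_left_ext K f g h \<phi> \<longleftrightarrow> abs_left_lift K (YF Y g) (YF Y f) h \<phi>') \<and>
         (abs_left_lift K f h g \<phi> \<longleftrightarrow> iso2 K \<phi>')"
proof -
  interpret yoneda_mates K Y A B C f g h \<phi> \<phi>'
    by (intro yoneda_mates.intro yoneda_structure.intro yoneda_structure_axioms.intro
        yoneda_mates_axioms.intro) (fact assms)+
  show ?thesis
    using left_ext_iff_left_lift pointwise_left_ext_iff_abs_left_lift abs_left_lift_iff_iso by blast
qed

end
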